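(* Let $\Theta\sim U[0,1]$ and let $T^{2,1,\Theta}$, $T^{2,2,\Theta}$ be the random policies with $T^{2,1,\Theta}_i=\mathcal{R}_{2,1,\Theta}(T_i^* )$ and $T^{2,2,\Theta}_i=\mathcal{R}_{2,2,\Theta}(T_i^* )$ for $i\in[n]$. Then $\mathbb{E}_\Theta\big[\min\{F(T^{2,1,\Theta}),F(T^{2,2,\Theta})\}\big]\le 1.2585\cdot\mathrm{OPT}(P)$.
   Context: An instance consists of integers $n\ge 1$, $D\ge 1$; a joint ordering cost $K_0>0$; for each commodity $i\in[n]$ an ordering cost $K_i>0$ and a holding coefficient $H_i>0$; and resource coefficients $\alpha_{id}\ge 0$. A policy is $T=(T_1,\dots,T_n)\in\mathbb{R}_{>0}^n$; it is resource-feasible if $\sum_{i}\alpha_{id}/T_i\le 1$ for every $d\in[D]$. For $g>0$, $\Delta\ge 0$, $\mathcal{M}_{g,\Delta}=\{0,g,\dots,\lfloor\Delta/g\rfloor g\}$; $N(T,\Delta)=|\bigcup_{i}\mathcal{M}_{T_i,\Delta}|$; $J(T)=K_0\limsup_{\Delta\to\infty}N(T,\Delta)/\Delta$; $F(T)=J(T)+\sum_i(K_i/T_i+H_iT_i)$. The convex relaxation (P) is: minimize $K_0/T_{\min}+\sum_{i\in[n]}(K_i/T_i+H_iT_i)$ over $(T_{\min},T_1,\dots,T_n)$ subject to $T_i\ge T_{\min}\ge0$ for all $i$ and $\sum_i\alpha_{id}/T_i\le1$ for all $d$. $\mathrm{OPT}(P)$ is its optimal value and $T^*=(T^*_{\min},T^*_1,\dots,T^*_n)$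 is a fixed optimal solution (with $T^*_{\min}>0$). For integers $m\ge2$, $k\ge1$ and $\theta\in[0,1]$: $\mathcal{G}_{m,k,\theta}=\{m^{(p+\theta)/k}T^*_{\min}:p\in\mathbb{Z}\}$ and $\mathcal{R}_{m,k,\theta}(t)=\min\{g\in\mathcal{G}_{m,k,\theta}:g>t\}$ for $t>0$. *)

theory Defs
  imports "HOL-Analysis.Analysis"
begin

text \<open>Commodities are indexed by 1..n, resources by 1..D. A policy is a function
  nat => real of which only the values on 1..n matter.\<close>

definition mult_set :: "real \<Rightarrow> real \<Rightarrow> real set" where
  "mult_set g \<Delta> = (\<lambda>k::nat. real k * g) ` {0..nat \<lfloor>\<Delta> / g\<rfloor>}"

definition Ncount :: "nat \<Rightarrow> (nat \<Rightarrow> real) \<Rightarrow> real \<Rightarrow> nat" where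
  "Ncount n T \<Delta> = card (\<Union>i\<in>{1..n}. mult_set (T i) \<Delta>)"

definition Jcost :: "nat \<Rightarrow> real \<Rightarrow> (nat \<Rightarrow> real) \<Rightarrow> real" where
  "Jcost n K0 T = K0 * real_of_ereal
     (Limsup at_top (\<lambda>\<Delta>::real. ereal (real (Ncount n T \<Delta>) / \<Delta>)))"

definition Fcost :: "nat \<Rightarrow> real \<Rightarrow> (nat \<Rightarrow> real) \<Rightarrow> (nat \<Rightarrow> real) \<Rightarrow> (nat \<Rightarrow> real) \<Rightarrow> real" where
  "Fcost n K0 K H T = Jcost n K0 T + (\<Sum>i\<in>{1..n}. K i / T i + H i * T i)"

text \<open>Relaxation (P). The variable is a pair (Tmin, T). The objective K0/Tmin is +infinity
  at Tmin = 0, so feasibility is taken with Tmin > 0.\<close>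

definition P_feasible :: "nat \<Rightarrow> nat \<Rightarrow> (nat \<Rightarrow> nat \<Rightarrow> real) \<Rightarrow> real \<Rightarrow> (nat \<Rightarrow> real) \<Rightarrow> bool" where
  "P_feasible n D \<alpha> Tmin T \<longleftrightarrow> 0 < Tmin \<and> (\<forall>i\<in>{1..n}. Tmin \<le> T i) \<and>
     (\<forall>d\<in>{1..D}. (\<Sum>i\<in>{1..n}. \<alpha> i d / T i) \<le> 1)"

definition P_obj :: "nat \<Rightarrow> real \<Rightarrow> (nat \<Rightarrow> real) \<Rightarrow> (nat \<Rightarrow> real) \<Rightarrow> real \<Rightarrow> (nat \<Rightarrow> real) \<Rightarrow> real" where
  "P_obj n K0 K H Tmin T = K0 / Tmin + (\<Sum>i\<in>{1..n}. K i / T i + H i * T i)"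

definition P_optimal :: "nat \<Rightarrow> nat \<Rightarrow> real \<Rightarrow> (nat \<Rightarrow> real) \<Rightarrow> (nat \<Rightarrow> real) \<Rightarrow> (nat \<Rightarrow> nat \<Rightarrow> real)
    \<Rightarrow> real \<Rightarrow> (nat \<Rightarrow> real) \<Rightarrow> bool" where
  "P_optimal n D K0 K H \<alpha> Tmin T \<longleftrightarrow> P_feasible n D \<alpha> Tmin T \<and>
     (\<forall>Tmin' T'. P_feasible n D \<alpha> Tmin' T' \<longrightarrow> P_obj n K0 K H Tmin T \<le> P_obj n K0 K H Tmin' T')"

definition OPT_P :: "nat \<Rightarrow> nat \<Rightarrow> real \<Rightarrow> (nat \<Rightarrow> real) \<Rightarrow> (nat \<Rightarrow> real) \<Rightarrow> (nat \<Rightarrow> nat \<Rightarrow> real) \<Rightarrow> real" where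
  "OPT_P n D K0 K H \<alpha> = Inf {P_obj n K0 K H Tmin T | Tmin T. P_feasible n D \<alpha> Tmin T}"

definition grid :: "nat \<Rightarrow> nat \<Rightarrow> real \<Rightarrow> real \<Rightarrow> real set" where
  "grid m k \<theta> Tmin = {real m powr ((real_of_int p + \<theta>) / real k) * Tmin | p::int. True}"

definition round_up :: "nat \<Rightarrow> nat \<Rightarrow> real \<Rightarrow> real \<Rightarrow> real \<Rightarrow> real" where
  "round_up m k \<theta> Tmin t = (LEAST g. g \<in> grid m k \<theta> Tmin \<and> t < g)"

end

theory Submission
  imports Defs
begin

(* For t \<ge> T*_min, rounding t up to the grid m^((p + \<theta>)/k) T*_min multiplies it by m^(w/k),
   where the offset w \<in> (0, 1] is uniformly distributed when \<theta> is. Hence the averages over \<theta>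
   of R(t) and of 1/R(t) are t and 1/t times explicit constants. Every rounded period is
   m^(d/k) R(T*_min) with d \<in> \<nat>, i.e. an integer multiple of one of the k base periods
   m^(j/k) R(T*_min), j < k; counting multiples bounds the joint cost by
   K_0 (\<Sum>j<k. m^(-j/k)) / R(T*_min). Finally min {F_1, F_2} \<le> p F_1 + (1 - p) F_2 with
   p = 0.2555, and after integration each of the three kinds of terms of the objective of (P)
   carries a coefficient at most 1.2585. *)

section \<open>Rounding up to a geometric grid\<close>

text \<open>The distance from x up to the least point of \<theta> + \<int> strictly above x.\<close>

definition grid_offset :: "real \<Rightarrow> real \<Rightarrow> real" where
  "grid_offset x \<theta> = real_of_int \<lfloor>x - \<theta>\<rfloor> + 1 + \<theta> - x"

lemma grid_offset_bounds: "0 < grid_offset x \<theta>" "grid_offset x \<theta> \<le> 1"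
  unfolding grid_offset_def by linarith+

lemma round_up_eq_grid_point:
  assumes m: "m \<ge> 2" and k: "k \<ge> 1" and Tm: "Tm > 0" and t: "t > 0"
  shows "round_up m k \<theta> Tm t
           = Tm * real m powr ((real_of_int \<lfloor>k * log m (t / Tm) - \<theta>\<rfloor> + 1 + \<theta>) / k)"
proof -
  define x where "x = k * log m (t / Tm)"
  define E where "E y = Tm * real m powr (y / k)" for y
  have E_less_iff: "E y < E z \<longleftrightarrow> y < z" for y z
    unfolding E_def using Tm k m by (simp add: divide_less_cancel)
  have t_eq: "t = E x"
    unfolding E_def x_def using Tm t k m by simp
  have grid_eq: "grid m k \<theta> Tm = {E (real_of_int p + \<theta>) | p. True}"
    unfolding grid_def E_def by (simp add: mult.commute)
  define p0 where "p0 = \<lfloor>x - \<theta>\<rfloor> + 1"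
  have "round_up m k \<theta> Tm t = E (real_of_int p0 + \<theta>)"
    unfolding round_up_def
  proof (rule Least_equality)
    have "E (real_of_int p0 + \<theta>) \<in> grid m k \<theta> Tm"
      unfolding grid_eq by blast
    moreover have "t < E (real_of_int p0 + \<theta>)"
      unfolding t_eq E_less_iff p0_def by linarith
    ultimately show "E (real_of_int p0 + \<theta>) \<in> grid m k \<theta> Tm \<and> t < E (real_of_int p0 + \<theta>)" ..
  next
    fix y assume "y \<in> grid m k \<theta> Tm \<and> t < y"
    then obtain p where y: "y = E (real_of_int p + \<theta>)" and "x < real_of_int p + \<theta>"
      unfolding grid_eq t_eq by (auto simp: E_less_iff)
    then have "p0 \<le> p" unfolding p0_def by linarith
    then show "E (real_of_int p0 + \<theta>) \<le> y"
      unfolding y by (simp add: E_less_iff not_less[symmetric])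
  qed
  then show ?thesis unfolding E_def x_def p0_def by (simp add: add.assoc)
qed

lemma round_up_eq_offset:
  assumes "m \<ge> 2" "k \<ge> 1" "Tm > 0" "t > 0"
  shows "round_up m k \<theta> Tm t = t * real m powr (grid_offset (k * log m (t / Tm)) \<theta> / k)"
proof -
  define x where "x = k * log m (t / Tm)"
  have "t = Tm * real m powr (x / k)"
    unfolding x_def using assms by simp
  then have "t * real m powr (grid_offset x \<theta> / k) = Tm * real m powr ((x + grid_offset x \<theta>) / k)"
    by (simp add: powr_add add_divide_distrib)
  moreover have "x + grid_offset x \<theta> = real_of_int \<lfloor>x - \<theta>\<rfloor> + 1 + \<theta>"
    unfolding grid_offset_def by simp
  ultimately show ?thesis
    unfolding round_up_eq_grid_point[OF assms] x_def by simp
qed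

lemma round_up_bounds:
  assumes m: "m \<ge> 2" and k: "k \<ge> 1" and "Tm > 0" and t: "t > 0"
  shows "t < round_up m k \<theta> Tm t" "round_up m k \<theta> Tm t \<le> real m * t"
proof -
  define w where "w = grid_offset (k * log m (t / Tm)) \<theta> / k"
  have "0 < w" "w \<le> 1"
    unfolding w_def using grid_offset_bounds k
    by (auto simp: divide_le_eq intro: order_trans[OF grid_offset_bounds(2)])
  then have "1 < real m powr w" "real m powr w \<le> real m"
    using m powr_mono[of w 1 "real m"] by auto
  then show "t < round_up m k \<theta> Tm t" "round_up m k \<theta> Tm t \<le> real m * t"
    unfolding round_up_eq_offset[OF assms] w_def[symmetric] using m t by auto
qed

lemma round_up_eq_powr_mult_round_up_min:
  assumes m: "m \<ge> 2" and k: "k \<ge> 1" and Tm: "Tm > 0" and t: "Tm \<le> t"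
  obtains d :: nat where "round_up m k \<theta> Tm t = real m powr (d / k) * round_up m k \<theta> Tm Tm"
proof -
  define x where "x = k * log m (t / Tm)"
  have "0 \<le> x" unfolding x_def using m Tm t by simp
  then have floor_le: "\<lfloor>- \<theta>\<rfloor> \<le> \<lfloor>x - \<theta>\<rfloor>" by (intro floor_mono) simp
  define d where "d = nat (\<lfloor>x - \<theta>\<rfloor> - \<lfloor>- \<theta>\<rfloor>)"
  have exponent_eq:
    "real d + (real_of_int \<lfloor>- \<theta>\<rfloor> + 1 + \<theta>) = real_of_int \<lfloor>x - \<theta>\<rfloor> + 1 + \<theta>"
    unfolding d_def using floor_le by simp
  have "round_up m k \<theta> Tm Tm = Tm * real m powr ((real_of_int \<lfloor>- \<theta>\<rfloor> + 1 + \<theta>) / k)"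
    using round_up_eq_grid_point[OF m k Tm Tm] Tm by simp
  moreover have "round_up m k \<theta> Tm t = Tm * real m powr ((real_of_int \<lfloor>x - \<theta>\<rfloor> + 1 + \<theta>) / k)"
    using round_up_eq_grid_point[OF m k Tm] Tm t unfolding x_def by simp
  ultimately have "round_up m k \<theta> Tm t = real m powr (d / k) * round_up m k \<theta> Tm Tm"
    by (simp flip: exponent_eq add: powr_add add_divide_distrib)
  then show ?thesis by (rule that)
qed

section \<open>Averaging over the grid offset\<close>

lemma has_integral_exp_affine_interior:
  fixes s c a b :: real
  assumes s: "s \<noteq> 0" and ab: "a \<le> b"
    and h: "\<And>\<theta>. \<theta> \<in> {a<..<b} \<Longrightarrow> h \<theta> = exp (s * (\<theta> + c))"
  shows "(h has_integral (exp (s * (b + c)) - exp (s * (a + c))) / s) {a..b}"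
proof -
  define G where "G \<theta> = exp (s * (\<theta> + c)) / s" for \<theta>
  have "(G has_real_derivative exp (s * (\<theta> + c)) * s / s) (at \<theta>)" for \<theta>
    unfolding G_def by (auto intro!: derivative_eq_intros)
  then have G': "(G has_vector_derivative exp (s * (\<theta> + c))) (at \<theta>)" for \<theta>
    using s by (simp add: has_real_derivative_iff_has_vector_derivative)
  have "(h has_integral (G b - G a)) {a..b}"
  proof (rule fundamental_theorem_of_calculus_interior[OF ab])
    show "continuous_on {a..b} G"
      unfolding G_def using s by (intro continuous_intros) auto
    show "(G has_vector_derivative h \<theta>) (at \<theta>)" if "\<theta> \<in> {a<..<b}" for \<theta>
      using G'[of \<theta>] h[OF that] by simp
  qed
  then show ?thesis
    unfolding G_def by (simp add: diff_divide_distrib)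
qed

lemma has_integral_exp_grid_offset:
  assumes s: "s \<noteq> 0"
  shows "((\<lambda>\<theta>. exp (s * grid_offset x \<theta>)) has_integral (exp s - 1) / s) {0..1}"
proof -
  \<comment> \<open>On (0, f) and (f, 1) the offset is \<theta> + 1 - f resp. \<theta> - f; the two pieces
      reassemble the integral of exp (s u) over u \<in> [0, 1].\<close>
  define f where "f = x - real_of_int \<lfloor>x\<rfloor>"
  have f: "0 \<le> f" "f \<le> 1" unfolding f_def by linarith+
  have below: "((\<lambda>\<theta>. exp (s * grid_offset x \<theta>)) has_integral
        (exp (s * (f + (1 - f))) - exp (s * (0 + (1 - f)))) / s) {0..f}"
  proof (rule has_integral_exp_affine_interior[OF s f(1)])
    fix \<theta> :: real assume "\<theta> \<in> {0<..<f}"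
    then have "\<lfloor>x - \<theta>\<rfloor> = \<lfloor>x\<rfloor>" unfolding f_def by (intro floor_unique) (auto, linarith)
    then show "exp (s * grid_offset x \<theta>) = exp (s * (\<theta> + (1 - f)))"
      unfolding grid_offset_def f_def by (simp add: algebra_simps)
  qed
  have above: "((\<lambda>\<theta>. exp (s * grid_offset x \<theta>)) has_integral
        (exp (s * (1 + - f)) - exp (s * (f + - f))) / s) {f..1}"
  proof (rule has_integral_exp_affine_interior[OF s f(2)])
    fix \<theta> :: real assume "\<theta> \<in> {f<..<1}"
    then have "\<lfloor>x - \<theta>\<rfloor> = \<lfloor>x\<rfloor> - 1" unfolding f_def by (intro floor_unique) (auto, linarith+)
    then have "real_of_int \<lfloor>x - \<theta>\<rfloor> = real_of_int \<lfloor>x\<rfloor> - 1" by simp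
    then show "exp (s * grid_offset x \<theta>) = exp (s * (\<theta> + - f))"
      unfolding grid_offset_def f_def by (simp add: algebra_simps)
  qed
  show ?thesis
    using has_integral_combine[OF f below above] by (simp add: diff_divide_distrib add_divide_distrib)
qed

definition mean_round_up_factor :: "nat \<Rightarrow> nat \<Rightarrow> real" where
  "mean_round_up_factor m k = (real m powr (1 / k) - 1) / (ln m / k)"

definition mean_inverse_round_up_factor :: "nat \<Rightarrow> nat \<Rightarrow> real" where
  "mean_inverse_round_up_factor m k = (1 - real m powr (- 1 / k)) / (ln m / k)"

lemma has_integral_round_up:
  assumes m: "m \<ge> 2" and k: "k \<ge> 1" and "Tm > 0" and t: "t > 0"
  shows "((\<lambda>\<theta>. round_up m k \<theta> Tm t) has_integral t * mean_round_up_factor m k) {0..1}"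
proof -
  define s where "s = ln m / k"
  have "s \<noteq> 0" unfolding s_def using m k by simp
  then have "((\<lambda>\<theta>. t * exp (s * grid_offset (k * log m (t / Tm)) \<theta>))
      has_integral t * ((exp s - 1) / s)) {0..1}"
    by (intro has_integral_mult_right has_integral_exp_grid_offset)
  moreover have "round_up m k \<theta> Tm t = t * exp (s * grid_offset (k * log m (t / Tm)) \<theta>)" for \<theta>
    unfolding round_up_eq_offset[OF assms] s_def using m by (simp add: powr_def)
  moreover have "(exp s - 1) / s = mean_round_up_factor m k"
    unfolding mean_round_up_factor_def s_def using m by (simp add: powr_def)
  ultimately show ?thesis by simp
qed

lemma has_integral_inverse_round_up:
  assumes m: "m \<ge> 2" and k: "k \<ge> 1" and "Tm > 0" and t: "t > 0"
  shows "((\<lambda>\<theta>. 1 / round_up m k \<theta> Tm t) has_integral mean_inverse_round_up_factor m k / t) {0..1}"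
proof -
  define s where "s = - ln m / k"
  have "s \<noteq> 0" unfolding s_def using m k by simp
  then have "((\<lambda>\<theta>. 1 / t * exp (s * grid_offset (k * log m (t / Tm)) \<theta>))
      has_integral 1 / t * ((exp s - 1) / s)) {0..1}"
    by (intro has_integral_mult_right has_integral_exp_grid_offset)
  moreover have "1 / round_up m k \<theta> Tm t = 1 / t * exp (s * grid_offset (k * log m (t / Tm)) \<theta>)" for \<theta>
    unfolding round_up_eq_offset[OF assms] s_def using m by (simp add: powr_def exp_minus field_simps)
  moreover have "exp s = real m powr (- 1 / k)"
    unfolding s_def using m by (simp add: powr_def)
  then have "1 / t * ((exp s - 1) / s) = mean_inverse_round_up_factor m k / t"
    unfolding mean_inverse_round_up_factor_def s_def using m k by (simp add: divide_simps) argo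
  ultimately show ?thesis by simp
qed

section \<open>The joint ordering cost\<close>

lemma Limsup_Ncount_ratio_nonneg:
  "0 \<le> Limsup at_top (\<lambda>\<Delta>::real. ereal (real (Ncount n T \<Delta>) / \<Delta>))"
  by (rule le_Limsup) (auto intro!: eventually_mono[OF eventually_gt_at_top[of 0]])

lemma Jcost_nonneg:
  assumes "K0 \<ge> 0"
  shows "0 \<le> Jcost n K0 T"
  unfolding Jcost_def using assms Limsup_Ncount_ratio_nonneg by (simp add: real_of_ereal_pos)

lemma Jcost_le_if_Ncount_le:
  assumes K0: "K0 \<ge> 0"
    and N: "\<And>\<Delta>. \<Delta> > 0 \<Longrightarrow> real (Ncount n T \<Delta>) \<le> a * \<Delta> + b"
  shows "Jcost n K0 T \<le> K0 * a"
proof -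
  define X where "X = Limsup at_top (\<lambda>\<Delta>::real. ereal (real (Ncount n T \<Delta>) / \<Delta>))"
  have "X \<le> Limsup at_top (\<lambda>\<Delta>::real. ereal (a + b / \<Delta>))" unfolding X_def
  proof (rule Limsup_mono, rule eventually_mono[OF eventually_gt_at_top[of 0]])
    fix \<Delta> :: real assume "0 < \<Delta>"
    then have "real (Ncount n T \<Delta>) / \<Delta> \<le> a + b / \<Delta>"
      using N[of \<Delta>] by (simp add: divide_le_eq algebra_simps)
    then show "ereal (real (Ncount n T \<Delta>) / \<Delta>) \<le> ereal (a + b / \<Delta>)" by simp
  qed
  also have "\<dots> = ereal a"
  proof (rule lim_imp_Limsup)
    have "((\<lambda>\<Delta>::real. a + b / \<Delta>) \<longlongrightarrow> a + 0) at_top"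
      by (intro tendsto_intros tendsto_divide_0[OF tendsto_const]
          filterlim_at_top_imp_at_infinity[OF filterlim_ident])
    then show "((\<lambda>\<Delta>::real. ereal (a + b / \<Delta>)) \<longlongrightarrow> ereal a) at_top"
      by (simp add: tendsto_ereal)
  qed simp
  finally obtain r where "X = ereal r" "r \<le> a"
    using Limsup_Ncount_ratio_nonneg[of n T] unfolding X_def[symmetric] by (cases X) auto
  then show ?thesis
    unfolding Jcost_def X_def[symmetric] using K0 by (simp add: mult_left_mono)
qed

lemma card_mult_set_le:
  assumes "g > 0" "\<Delta> \<ge> 0"
  shows "real (card (mult_set g \<Delta>)) \<le> \<Delta> / g + 1"
proof -
  have "card (mult_set g \<Delta>) \<le> nat \<lfloor>\<Delta> / g\<rfloor> + 1"
    unfolding mult_set_def using card_image_le[of "{0..nat \<lfloor>\<Delta> / g\<rfloor>}"] by simp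
  moreover have "real (nat \<lfloor>\<Delta> / g\<rfloor>) \<le> \<Delta> / g" using assms by simp
  ultimately show ?thesis by linarith
qed

lemma mult_set_multiple_subset:
  assumes g: "g > 0"
  shows "mult_set (real j * g) \<Delta> \<subseteq> mult_set g \<Delta>"
proof
  fix y assume "y \<in> mult_set (real j * g) \<Delta>"
  then obtain i where i: "i \<le> nat \<lfloor>\<Delta> / (real j * g)\<rfloor>" and y: "y = real (i * j) * g"
    unfolding mult_set_def by auto
  have "i * j \<le> nat \<lfloor>\<Delta> / g\<rfloor>"
  proof (cases "i * j = 0")
    case False
    then have "0 < i" by simp
    then have "int i \<le> \<lfloor>\<Delta> / (real j * g)\<rfloor>" using i by linarith
    then have "real i \<le> \<Delta> / (real j * g)" by (simp add: le_floor_iff)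
    then have "real (i * j) \<le> \<Delta> / g" using False g by (simp add: field_simps)
    then show ?thesis by linarith
  qed auto
  then show "y \<in> mult_set g \<Delta>" unfolding mult_set_def y by (intro imageI) simp
qed

lemma Ncount_le_multiples:
  assumes G: "finite G" "\<And>g. g \<in> G \<Longrightarrow> g > 0"
    and T: "\<And>i. i \<in> {1..n} \<Longrightarrow> \<exists>g\<in>G. \<exists>j::nat. T i = real j * g"
    and \<Delta>: "\<Delta> \<ge> 0"
  shows "real (Ncount n T \<Delta>) \<le> (\<Sum>g\<in>G. 1 / g) * \<Delta> + card G"
proof -
  have "(\<Union>i\<in>{1..n}. mult_set (T i) \<Delta>) \<subseteq> (\<Union>g\<in>G. mult_set g \<Delta>)"
    using T G(2) mult_set_multiple_subset by fastforce
  then have "Ncount n T \<Delta> \<le> card (\<Union>g\<in>G. mult_set g \<Delta>)"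
    unfolding Ncount_def using G(1) by (intro card_mono) (auto simp: mult_set_def)
  also have "\<dots> \<le> (\<Sum>g\<in>G. card (mult_set g \<Delta>))"
    by (rule card_UN_le[OF G(1)])
  finally have "real (Ncount n T \<Delta>) \<le> (\<Sum>g\<in>G. real (card (mult_set g \<Delta>)))"
    by (simp flip: of_nat_sum)
  also have "\<dots> \<le> (\<Sum>g\<in>G. \<Delta> / g + 1)"
    using G(2) \<Delta> by (intro sum_mono card_mult_set_le)
  finally show ?thesis
    by (simp add: sum.distrib sum_distrib_right)
qed

lemma Jcost_cong:
  assumes "\<And>i. i \<in> {1..n} \<Longrightarrow> T i = T' i"
  shows "Jcost n K0 T = Jcost n K0 T'"
proof -
  have "Ncount n T = Ncount n T'"
    unfolding Ncount_def[abs_def] using assms by simp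
  then show ?thesis unfolding Jcost_def by simp
qed

lemma Ncount_scale:
  assumes s: "s > 0"
  shows "Ncount n (\<lambda>i. s * T i) \<Delta> = Ncount n T (\<Delta> / s)"
proof -
  have "mult_set (s * g) \<Delta> = (*) s ` mult_set g (\<Delta> / s)" for g
    unfolding mult_set_def image_image by (simp add: ac_simps)
  then have "(\<Union>i\<in>{1..n}. mult_set (s * T i) \<Delta>) = (*) s ` (\<Union>i\<in>{1..n}. mult_set (T i) (\<Delta> / s))"
    by (simp add: image_UN)
  moreover have "inj_on ((*) s) A" for A using s by (intro inj_onI) simp
  ultimately show ?thesis
    unfolding Ncount_def by (simp add: card_image)
qed

lemma Jcost_scale:
  assumes s: "s > 0"
  shows "Jcost n K0 (\<lambda>i. s * T i) = Jcost n K0 T / s"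
proof -
  let ?h = "\<lambda>\<Delta>::real. ereal (real (Ncount n T \<Delta>) / \<Delta>)"
  have rescale: "filtermap (\<lambda>\<Delta>::real. \<Delta> / s) at_top = at_top"
  proof (rule filtermap_fun_inverse[where g = "\<lambda>\<Delta>. s * \<Delta>"])
    show "filterlim (\<lambda>\<Delta>::real. s * \<Delta>) at_top at_top"
      using s by (intro filterlim_tendsto_pos_mult_at_top[OF tendsto_const] filterlim_ident)
    show "filterlim (\<lambda>\<Delta>::real. \<Delta> / s) at_top at_top"
      using filterlim_at_top_mult_tendsto_pos[OF tendsto_const[of "1 / s"] _ filterlim_ident] s
      by simp
    show "\<forall>\<^sub>F \<Delta> in at_top. s * \<Delta> / s = \<Delta>" using s by simp
  qed
  have inj: "inj (\<lambda>\<Delta>::real. \<Delta> / s)" using s by (intro injI) simp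
  have "Limsup at_top (\<lambda>\<Delta>::real. ereal (real (Ncount n (\<lambda>i. s * T i) \<Delta>) / \<Delta>))
      = Limsup at_top (\<lambda>\<Delta>. ereal (1 / s) * ?h (\<Delta> / s))"
    using s by (intro arg_cong[where f = "Limsup at_top"] ext) (simp add: Ncount_scale)
  also have "\<dots> = ereal (1 / s) * Limsup at_top (\<lambda>\<Delta>. ?h (\<Delta> / s))"
    using s by (intro Limsup_ereal_mult_left) auto
  also have "Limsup at_top (\<lambda>\<Delta>. ?h (\<Delta> / s)) = Limsup at_top ?h"
    using Limsup_filtermap_eq[OF inj, of at_top ?h] rescale by simp
  finally show ?thesis unfolding Jcost_def by (simp add: real_of_ereal_mult)
qed

definition joint_factor :: "nat \<Rightarrow> nat \<Rightarrow> real" where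
  "joint_factor m k = (\<Sum>j<k. real m powr (- real j / k))"

lemma Jcost_round_up_le:
  assumes m: "m \<ge> 2" and k: "k \<ge> 1" and Tm: "Tm > 0" and K0: "K0 \<ge> 0"
    and T: "\<And>i. i \<in> {1..n} \<Longrightarrow> Tm \<le> T i"
  shows "Jcost n K0 (\<lambda>i. round_up m k \<theta> Tm (T i)) \<le> joint_factor m k * K0 / round_up m k \<theta> Tm Tm"
proof -
  define g where "g = round_up m k \<theta> Tm Tm"
  have g: "g > 0" unfolding g_def using round_up_bounds(1)[OF m k Tm Tm, of \<theta>] Tm by simp
  define base where "base j = real m powr (real j / k) * g" for j :: nat
  have multiple: "\<exists>b\<in>base ` {..<k}. \<exists>j::nat. round_up m k \<theta> Tm (T i) = real j * b"
    if i: "i \<in> {1..n}" for i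
  proof -
    obtain d :: nat where d: "round_up m k \<theta> Tm (T i) = real m powr (d / k) * g"
      using round_up_eq_powr_mult_round_up_min[OF m k Tm T[OF i]] unfolding g_def by metis
    have "real d / k = real (d div k) + real (d mod k) / k"
      using k by (simp add: field_simps flip: of_nat_mult of_nat_add)
    then have "round_up m k \<theta> Tm (T i) = real (m ^ (d div k)) * base (d mod k)"
      unfolding d base_def using m by (simp add: powr_add powr_realpow)
    moreover have "d mod k < k" using k by simp
    ultimately show ?thesis by blast
  qed
  have "real (Ncount n (\<lambda>i. round_up m k \<theta> Tm (T i)) \<Delta>)
      \<le> (\<Sum>b\<in>base ` {..<k}. 1 / b) * \<Delta> + card (base ` {..<k})" if "\<Delta> > 0" for \<Delta>
    using g m that multiple by (intro Ncount_le_multiples) (auto simp: base_def)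
  then have "Jcost n K0 (\<lambda>i. round_up m k \<theta> Tm (T i)) \<le> K0 * (\<Sum>b\<in>base ` {..<k}. 1 / b)"
    by (rule Jcost_le_if_Ncount_le[OF K0])
  also have "(\<Sum>b\<in>base ` {..<k}. 1 / b) \<le> (\<Sum>j<k. 1 / base j)"
    using sum_image_le[of "{..<k}" "\<lambda>b. 1 / b" base] g m by (simp add: base_def o_def)
  also have "(\<Sum>j<k. 1 / base j) = joint_factor m k / g"
    unfolding joint_factor_def base_def sum_divide_distrib using m
    by (intro sum.cong) (simp_all add: powr_minus_divide)
  finally have "Jcost n K0 (\<lambda>i. round_up m k \<theta> Tm (T i)) \<le> K0 * (joint_factor m k / g)"
    using K0 by (simp add: mult_left_mono)
  then show ?thesis
    unfolding g_def by (simp add: ac_simps)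
qed

section \<open>Measurability in the offset\<close>

lemma measurable_map_count_space:
  fixes f :: "'i \<Rightarrow> 'a \<Rightarrow> 'b::countable"
  assumes "\<And>i. i \<in> set xs \<Longrightarrow> f i \<in> M \<rightarrow>\<^sub>M count_space UNIV"
  shows "(\<lambda>x. map (\<lambda>i. f i x) xs) \<in> M \<rightarrow>\<^sub>M count_space UNIV"
  using assms
proof (induction xs)
  case (Cons j xs)
  have "(\<lambda>x. (f j x, map (\<lambda>i. f i x) xs)) \<in> M \<rightarrow>\<^sub>M count_space UNIV \<Otimes>\<^sub>M count_space UNIV"
    using Cons by (intro measurable_Pair) auto
  then have "(\<lambda>x. (f j x, map (\<lambda>i. f i x) xs)) \<in> M \<rightarrow>\<^sub>M count_space UNIV"
    by (simp add: pair_measure_countable)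
  then have "(\<lambda>x. (\<lambda>p. fst p # snd p) (f j x, map (\<lambda>i. f i x) xs)) \<in> M \<rightarrow>\<^sub>M count_space UNIV"
    by (rule measurable_compose) simp
  then show ?case by simp
qed simp

lemma round_up_measurable:
  assumes "m \<ge> 2" "k \<ge> 1" "Tm > 0" "t > 0"
  shows "(\<lambda>\<theta>. round_up m k \<theta> Tm t) \<in> borel_measurable borel"
  unfolding round_up_eq_grid_point[OF assms] by measurable

text \<open>Jcost is not continuous in the policy, but the rounded policy is
  m^(\<theta>/k) times a policy that depends on \<theta> only through the integer list of floors
  below; so Jcost is a countable-valued function of \<theta> divided by m^(\<theta>/k).\<close>

lemma Jcost_round_up_measurable:
  assumes m: "m \<ge> 2" and k: "k \<ge> 1" and Tm: "Tm > 0" and T: "\<And>i. i \<in> {1..n} \<Longrightarrow> T i > 0"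
  shows "(\<lambda>\<theta>. Jcost n K0 (\<lambda>i. round_up m k \<theta> Tm (T i))) \<in> borel_measurable borel"
proof -
  define x where "x i = k * log m (T i / Tm)" for i
  define floors where "floors \<theta> = map (\<lambda>i. \<lfloor>x (i + 1) - \<theta>\<rfloor>) [0..<n]" for \<theta>
  define J where "J l = Jcost n K0 (\<lambda>i. Tm * real m powr ((real_of_int (l ! (i - 1)) + 1) / k))"
    for l :: "int list"
  have Jcost_eq: "Jcost n K0 (\<lambda>i. round_up m k \<theta> Tm (T i)) = J (floors \<theta>) / real m powr (\<theta> / k)"
    for \<theta>
  proof -
    have "Jcost n K0 (\<lambda>i. round_up m k \<theta> Tm (T i))
        = Jcost n K0 (\<lambda>i. real m powr (\<theta> / k) * (Tm * real m powr ((real_of_int (floors \<theta> ! (i - 1)) + 1) / k)))"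
    proof (rule Jcost_cong)
      fix i assume i: "i \<in> {1..n}"
      then have "floors \<theta> ! (i - 1) = \<lfloor>x i - \<theta>\<rfloor>"
        unfolding floors_def by (subst nth_map) auto
      then show "round_up m k \<theta> Tm (T i)
          = real m powr (\<theta> / k) * (Tm * real m powr ((real_of_int (floors \<theta> ! (i - 1)) + 1) / k))"
        unfolding round_up_eq_grid_point[OF m k Tm T[OF i]] x_def
        by (simp add: powr_add[symmetric] add_divide_distrib[symmetric] ac_simps)
    qed
    also have "\<dots> = J (floors \<theta>) / real m powr (\<theta> / k)"
      unfolding J_def using m by (intro Jcost_scale) simp
    finally show ?thesis .
  qed
  have floors_measurable: "floors \<in> borel \<rightarrow>\<^sub>M count_space UNIV"
    unfolding floors_def by (intro measurable_map_count_space) measurable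
  have "(\<lambda>\<theta>. J (floors \<theta>) / real m powr (\<theta> / k)) \<in> borel_measurable borel"
    by (rule measurable_compose_countable[where f = "\<lambda>l \<theta>. J l / real m powr (\<theta> / k)",
          OF _ floors_measurable]) measurable
  then show ?thesis unfolding Jcost_eq .
qed

lemma Fcost_round_up_measurable:
  assumes m: "m \<ge> 2" and k: "k \<ge> 1" and Tm: "Tm > 0" and T: "\<And>i. i \<in> {1..n} \<Longrightarrow> T i > 0"
  shows "(\<lambda>\<theta>. Fcost n K0 K H (\<lambda>i. round_up m k \<theta> Tm (T i))) \<in> borel_measurable borel"
  unfolding Fcost_def
  by (intro borel_measurable_add borel_measurable_sum borel_measurable_divide borel_measurable_times
      borel_measurable_const Jcost_round_up_measurable[OF assms] round_up_measurable[OF m k Tm T]) auto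

section \<open>Expected cost of a randomly rounded policy\<close>

lemma Fcost_round_up_nonneg:
  assumes m: "m \<ge> 2" and k: "k \<ge> 1" and Tm: "Tm > 0" and K0: "K0 \<ge> 0"
    and T: "\<And>i. i \<in> {1..n} \<Longrightarrow> T i > 0"
    and K: "\<And>i. i \<in> {1..n} \<Longrightarrow> K i \<ge> 0" and H: "\<And>i. i \<in> {1..n} \<Longrightarrow> H i \<ge> 0"
  shows "0 \<le> Fcost n K0 K H (\<lambda>i. round_up m k \<theta> Tm (T i))"
proof -
  have "0 \<le> K i / round_up m k \<theta> Tm (T i) + H i * round_up m k \<theta> Tm (T i)" if "i \<in> {1..n}" for i
    using round_up_bounds(1)[OF m k Tm T[OF that], of \<theta>] T[OF that] K[OF that] H[OF that] by simp
  then have "0 \<le> (\<Sum>i\<in>{1..n}. K i / round_up m k \<theta> Tm (T i) + H i * round_up m k \<theta> Tm (T i))"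
    by (rule sum_nonneg)
  with Jcost_nonneg[OF K0] show ?thesis
    unfolding Fcost_def by (rule add_nonneg_nonneg)
qed

lemma Fcost_round_up_le_P_obj:
  assumes m: "m \<ge> 2" and k: "k \<ge> 1" and Tm: "Tm > 0" and K0: "K0 \<ge> 0"
    and T: "\<And>i. i \<in> {1..n} \<Longrightarrow> Tm \<le> T i"
  shows "Fcost n K0 K H (\<lambda>i. round_up m k \<theta> Tm (T i))
           \<le> P_obj n (joint_factor m k * K0) K H (round_up m k \<theta> Tm Tm) (\<lambda>i. round_up m k \<theta> Tm (T i))"
  using Jcost_round_up_le[OF m k Tm K0 T, where \<theta> = \<theta>] unfolding Fcost_def P_obj_def by simp

lemma P_obj_round_up_le:
  assumes m: "m \<ge> 2" and k: "k \<ge> 1" and Tm: "Tm > 0" and K0: "K0 \<ge> 0"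
    and T: "\<And>i. i \<in> {1..n} \<Longrightarrow> T i > 0"
    and K: "\<And>i. i \<in> {1..n} \<Longrightarrow> K i \<ge> 0" and H: "\<And>i. i \<in> {1..n} \<Longrightarrow> H i \<ge> 0"
  shows "P_obj n K0 K H (round_up m k \<theta> Tm Tm) (\<lambda>i. round_up m k \<theta> Tm (T i))
           \<le> K0 / Tm + (\<Sum>i\<in>{1..n}. K i / T i + H i * (m * T i))"
proof -
  have inverse_le: "K / round_up m k \<theta> Tm t \<le> K / t" if "t > 0" "K \<ge> 0" for t K
    using round_up_bounds(1)[OF m k Tm that(1), of \<theta>] that by (intro divide_left_mono) auto
  have "K i / round_up m k \<theta> Tm (T i) + H i * round_up m k \<theta> Tm (T i) \<le> K i / T i + H i * (m * T i)"
    if i: "i \<in> {1..n}" for i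
    using inverse_le[OF T[OF i] K[OF i]]
      mult_left_mono[OF round_up_bounds(2)[OF m k Tm T[OF i], of \<theta>] H[OF i]] by simp
  then have "(\<Sum>i\<in>{1..n}. K i / round_up m k \<theta> Tm (T i) + H i * round_up m k \<theta> Tm (T i))
      \<le> (\<Sum>i\<in>{1..n}. K i / T i + H i * (m * T i))"
    by (rule sum_mono)
  with inverse_le[OF Tm K0] show ?thesis
    unfolding P_obj_def by (rule add_mono)
qed

definition P_obj_scaled ::
    "nat \<Rightarrow> real \<Rightarrow> (nat \<Rightarrow> real) \<Rightarrow> (nat \<Rightarrow> real) \<Rightarrow> real \<Rightarrow> (nat \<Rightarrow> real)
      \<Rightarrow> real \<Rightarrow> real \<Rightarrow> real \<Rightarrow> real"
  where "P_obj_scaled n K0 K H Tmin T a b c =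
    a * (K0 / Tmin) + (\<Sum>i\<in>{1..n}. b * (K i / T i) + c * (H i * T i))"

lemma P_obj_scaled_convex_combination:
  "p * P_obj_scaled n K0 K H Tmin T a b c + q * P_obj_scaled n K0 K H Tmin T a' b' c'
     = P_obj_scaled n K0 K H Tmin T (p * a + q * a') (p * b + q * b') (p * c + q * c')"
  unfolding P_obj_scaled_def
  by (simp add: algebra_simps sum.distrib sum_distrib_left)

lemma P_obj_scaled_mono:
  assumes "a \<le> a'" "b \<le> b'" "c \<le> c'" and "K0 \<ge> 0" "Tmin > 0"
    and "\<And>i. i \<in> {1..n} \<Longrightarrow> K i \<ge> 0" "\<And>i. i \<in> {1..n} \<Longrightarrow> H i \<ge> 0"
    and "\<And>i. i \<in> {1..n} \<Longrightarrow> T i > 0"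
  shows "P_obj_scaled n K0 K H Tmin T a b c \<le> P_obj_scaled n K0 K H Tmin T a' b' c'"
  unfolding P_obj_scaled_def using assms
  by (intro add_mono sum_mono mult_right_mono) (auto intro!: divide_nonneg_pos mult_nonneg_nonneg intro: less_imp_le)

lemma P_obj_scaled_const: "P_obj_scaled n K0 K H Tmin T r r r = r * P_obj n K0 K H Tmin T"
  unfolding P_obj_scaled_def P_obj_def by (simp add: algebra_simps sum_distrib_left)

lemma has_integral_P_obj_round_up:
  assumes m: "m \<ge> 2" and k: "k \<ge> 1" and Tm: "Tm > 0" and T: "\<And>i. i \<in> {1..n} \<Longrightarrow> T i > 0"
  shows "((\<lambda>\<theta>. P_obj n K0 K H (round_up m k \<theta> Tm Tm) (\<lambda>i. round_up m k \<theta> Tm (T i))) has_integral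
           P_obj_scaled n K0 K H Tm T (mean_inverse_round_up_factor m k)
             (mean_inverse_round_up_factor m k) (mean_round_up_factor m k)) {0..1}"
proof -
  have "((\<lambda>\<theta>. K0 * (1 / round_up m k \<theta> Tm Tm)
          + (\<Sum>i\<in>{1..n}. K i * (1 / round_up m k \<theta> Tm (T i)) + H i * round_up m k \<theta> Tm (T i)))
        has_integral K0 * (mean_inverse_round_up_factor m k / Tm)
          + (\<Sum>i\<in>{1..n}. K i * (mean_inverse_round_up_factor m k / T i)
                          + H i * (T i * mean_round_up_factor m k))) {0..1}"
    by (intro has_integral_add has_integral_mult_right has_integral_sum
        has_integral_round_up has_integral_inverse_round_up m k Tm T) auto
  then show ?thesis
    unfolding P_obj_def P_obj_scaled_def by (simp add: ac_simps)
qed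

lemma expected_Fcost_round_up_le:
  assumes m: "m \<ge> 2" and k: "k \<ge> 1" and Tm: "Tm > 0" and K0: "K0 \<ge> 0"
    and T: "\<And>i. i \<in> {1..n} \<Longrightarrow> Tm \<le> T i"
    and K: "\<And>i. i \<in> {1..n} \<Longrightarrow> K i \<ge> 0" and H: "\<And>i. i \<in> {1..n} \<Longrightarrow> H i \<ge> 0"
  shows "set_integrable lborel {0..1::real} (\<lambda>\<theta>. Fcost n K0 K H (\<lambda>i. round_up m k \<theta> Tm (T i)))"
    and "(LINT \<theta>:{0..1::real}|lborel. Fcost n K0 K H (\<lambda>i. round_up m k \<theta> Tm (T i)))
           \<le> P_obj_scaled n K0 K H Tm T (joint_factor m k * mean_inverse_round_up_factor m k)
               (mean_inverse_round_up_factor m k) (mean_round_up_factor m k)"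
proof -
  define F where "F \<theta> = Fcost n K0 K H (\<lambda>i. round_up m k \<theta> Tm (T i))" for \<theta>
  define U where "U \<theta> = P_obj n (joint_factor m k * K0) K H
      (round_up m k \<theta> Tm Tm) (\<lambda>i. round_up m k \<theta> Tm (T i))" for \<theta>
  have T_pos: "T i > 0" if "i \<in> {1..n}" for i
    using T[OF that] Tm by simp
  have joint_K0: "joint_factor m k * K0 \<ge> 0"
    unfolding joint_factor_def using K0 by (simp add: sum_nonneg)
  have F_le_U: "F \<theta> \<le> U \<theta>" for \<theta>
    unfolding F_def U_def using m k Tm K0 T by (rule Fcost_round_up_le_P_obj)
  have F_nonneg: "0 \<le> F \<theta>" for \<theta>
    unfolding F_def using m k Tm K0 T_pos K H by (rule Fcost_round_up_nonneg)
  have U_le: "U \<theta> \<le> joint_factor m k * K0 / Tm + (\<Sum>i\<in>{1..n}. K i / T i + H i * (m * T i))" for \<theta>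
    unfolding U_def using m k Tm joint_K0 T_pos K H by (rule P_obj_round_up_le)
  have "norm (F \<theta>) \<le> joint_factor m k * K0 / Tm + (\<Sum>i\<in>{1..n}. K i / T i + H i * (m * T i))" for \<theta>
    using F_nonneg[of \<theta>] F_le_U[of \<theta>] U_le[of \<theta>] by simp
  moreover have "F \<in> borel_measurable borel"
    unfolding F_def[abs_def] using T_pos by (intro Fcost_round_up_measurable m k Tm)
  ultimately show F_integrable: "set_integrable lborel {0..1::real} F"
    unfolding set_integrable_def by (intro integrableI_bounded_set_indicator) auto
  have "(U has_integral P_obj_scaled n (joint_factor m k * K0) K H Tm T (mean_inverse_round_up_factor m k)
      (mean_inverse_round_up_factor m k) (mean_round_up_factor m k)) {0..1}"
    unfolding U_def[abs_def] using m k Tm T_pos by (rule has_integral_P_obj_round_up)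
  then have U_integral: "(U has_integral P_obj_scaled n K0 K H Tm T
      (joint_factor m k * mean_inverse_round_up_factor m k)
      (mean_inverse_round_up_factor m k) (mean_round_up_factor m k)) {0..1}"
    unfolding P_obj_scaled_def by (simp add: ac_simps)
  have "(LINT \<theta>:{0..1::real}|lborel. F \<theta>) = integral {0..1} F"
    using F_integrable by (rule set_borel_integral_eq_integral(2))
  also have "\<dots> \<le> integral {0..1} U"
    using set_borel_integral_eq_integral(1)[OF F_integrable] U_integral F_le_U
    by (intro integral_le) auto
  finally show "(LINT \<theta>:{0..1::real}|lborel. F \<theta>)
      \<le> P_obj_scaled n K0 K H Tm T (joint_factor m k * mean_inverse_round_up_factor m k)
          (mean_inverse_round_up_factor m k) (mean_round_up_factor m k)"
    using integral_unique[OF U_integral] by simp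
qed

lemma OPT_P_eq_P_obj:
  assumes "P_optimal n D K0 K H \<alpha> Tmin T"
  shows "OPT_P n D K0 K H \<alpha> = P_obj n K0 K H Tmin T"
  unfolding OPT_P_def using assms unfolding P_optimal_def
  by (intro cInf_eq_minimum) auto

lemma set_integrable_min:
  fixes f g :: "'a \<Rightarrow> real"
  assumes "set_integrable M A f" "set_integrable M A g"
  shows "set_integrable M A (\<lambda>x. min (f x) (g x))"
proof -
  have "(\<lambda>x. indicator A x *\<^sub>R min (f x) (g x))
      = (\<lambda>x. min (indicator A x *\<^sub>R f x) (indicator A x *\<^sub>R g x))"
    by (auto simp: indicator_def)
  then show ?thesis
    using assms unfolding set_integrable_def by (simp add: integrable_min)
qed

section \<open>The constants for m = 2\<close>

lemma ln_2_ge: "0.69314 \<le> ln (2::real)"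
proof -
  have "(\<lambda>n. - ((- (- 1 / 2)) ^ n) / of_nat n) sums ln (1 + (- 1 / 2 :: real))"
    by (rule ln_series') simp
  then have "(\<lambda>n. (1 / 2) ^ n / of_nat n) sums (- ln (1 / 2 :: real))"
    using sums_minus by fastforce
  then have ln_2_sums: "(\<lambda>n. (1 / 2) ^ n / of_nat n) sums ln (2::real)"
    by (simp add: ln_div)
  have "(\<Sum>n<17. (1 / 2) ^ n / of_nat n) \<le> ln (2::real)"
    using sum_le_suminf[OF sums_summable[OF ln_2_sums], of "{..<17}"] sums_unique[OF ln_2_sums]
    by simp
  moreover have "0.69314 \<le> (\<Sum>n<17. (1 / 2) ^ n / of_nat n :: real)"
    by (simp add: eval_nat_numeral)
  ultimately show ?thesis by linarith
qed

lemma sqrt_2_le: "sqrt 2 \<le> (1.4142136::real)"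
proof -
  have "sqrt 2 \<le> sqrt (1.4142136 ^ 2 :: real)"
    by (rule real_sqrt_le_mono) (simp add: power2_eq_square)
  then show ?thesis by simp
qed

lemma joint_factor_ge_1:
  assumes "m > 0" and "k \<ge> 1" \<comment> \<open>needed since 0 powr 0 = 0\<close>
  shows "joint_factor m k \<ge> 1"
proof -
  have "joint_factor m k = 1 + (\<Sum>j\<in>{1..<k}. real m powr (- real j / k))"
    unfolding joint_factor_def using assms
    by (simp add: lessThan_atLeast0 sum.atLeast_Suc_lessThan)
  moreover have "(\<Sum>j\<in>{1..<k}. real m powr (- real j / k)) \<ge> 0"
    by (simp add: sum_nonneg)
  ultimately show ?thesis by simp
qed

lemma mean_inverse_round_up_factor_nonneg:
  assumes "m \<ge> 2"
  shows "mean_inverse_round_up_factor m k \<ge> 0"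
proof -
  have "1 \<le> real m powr (1 / k)"
    using assms by (intro ge_one_powr_ge_zero) auto
  then show ?thesis
    unfolding mean_inverse_round_up_factor_def using assms
    by (intro divide_nonneg_nonneg) (auto simp: powr_minus_divide)
qed

lemma round_up_factors_base_2:
  "mean_round_up_factor 2 1 = 1 / ln 2"
  "mean_round_up_factor 2 2 = 2 * (sqrt 2 - 1) / ln 2"
  "mean_inverse_round_up_factor 2 1 = 1 / (2 * ln 2)"
  "mean_inverse_round_up_factor 2 2 = 2 * (1 - 1 / sqrt 2) / ln 2"
  "joint_factor 2 1 = 1"
  "joint_factor 2 2 = 1 + 1 / sqrt 2"
  unfolding mean_round_up_factor_def mean_inverse_round_up_factor_def joint_factor_def
  by (simp_all add: powr_half_sqrt powr_minus_divide numeral_2_eq_2 field_simps)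

lemma mixed_mean_round_up_factor_le:
  "0.2555 * mean_round_up_factor 2 1 + 0.7445 * mean_round_up_factor 2 2 \<le> 1.2585"
proof -
  have "0.2555 + 0.7445 * (2 * (sqrt 2 - 1)) \<le> 1.2585 * ln (2::real)"
    using ln_2_ge sqrt_2_le by (simp add: field_simps)
  then show ?thesis
    unfolding round_up_factors_base_2 by (simp add: field_simps)
qed

lemma mixed_joint_inverse_factor_le:
  "0.2555 * (joint_factor 2 1 * mean_inverse_round_up_factor 2 1)
     + 0.7445 * (joint_factor 2 2 * mean_inverse_round_up_factor 2 2) \<le> 1.2585"
proof -
  have "(1 + 1 / sqrt 2) * (2 * (1 - 1 / sqrt 2)) = (1::real)"
    by (simp add: field_simps)
  then have k2: "joint_factor 2 2 * mean_inverse_round_up_factor 2 2 = 1 / ln 2"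
    unfolding round_up_factors_base_2 by (simp add: field_simps)
  have k1: "joint_factor 2 1 * mean_inverse_round_up_factor 2 1 = 1 / (2 * ln 2)"
    unfolding round_up_factors_base_2 by simp
  have "0.2555 / 2 + 0.7445 \<le> 1.2585 * ln (2::real)"
    using ln_2_ge by (simp add: field_simps)
  then show ?thesis
    unfolding k1 k2 by (simp add: field_simps)
qed

lemma mixed_inverse_factor_le:
  "0.2555 * mean_inverse_round_up_factor 2 1 + 0.7445 * mean_inverse_round_up_factor 2 2 \<le> 1.2585"
proof -
  have "mean_inverse_round_up_factor 2 k \<le> joint_factor 2 k * mean_inverse_round_up_factor 2 k"
    if "k \<ge> 1" for k
    using mult_right_mono[OF joint_factor_ge_1[OF _ that] mean_inverse_round_up_factor_nonneg] by simp
  from this[of 1] this[of 2] show ?thesis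
    using mixed_joint_inverse_factor_le by (simp add: field_simps)
qed

theorem lemma3p4:
  fixes n D :: nat and K0 :: real and K H Tstar :: "nat \<Rightarrow> real"
    and \<alpha> :: "nat \<Rightarrow> nat \<Rightarrow> real" and Tstar_min :: real
  assumes "n \<ge> 1" and "D \<ge> 1" and "K0 > 0"
    and "\<And>i. i \<in> {1..n} \<Longrightarrow> K i > 0"
    and "\<And>i. i \<in> {1..n} \<Longrightarrow> H i > 0"
    and "\<And>i d. i \<in> {1..n} \<Longrightarrow> d \<in> {1..D} \<Longrightarrow> \<alpha> i d \<ge> 0"
    and "P_optimal n D K0 K H \<alpha> Tstar_min Tstar"
    and "Tstar_min > 0"
  shows "set_integrable lborel {0..1::real}
           (\<lambda>\<theta>. min (Fcost n K0 K H (\<lambda>i. round_up 2 1 \<theta> Tstar_min (Tstar i)))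
                     (Fcost n K0 K H (\<lambda>i. round_up 2 2 \<theta> Tstar_min (Tstar i))))
       \<and> (LINT \<theta>:{0..1::real}|lborel.
            min (Fcost n K0 K H (\<lambda>i. round_up 2 1 \<theta> Tstar_min (Tstar i)))
                (Fcost n K0 K H (\<lambda>i. round_up 2 2 \<theta> Tstar_min (Tstar i))))
         \<le> 1.2585 * OPT_P n D K0 K H \<alpha>"
proof -
  have Tstar_ge: "Tstar_min \<le> Tstar i" if "i \<in> {1..n}" for i
    using assms(7) that unfolding P_optimal_def P_feasible_def by auto
  let ?F = "\<lambda>k \<theta>. Fcost n K0 K H (\<lambda>i. round_up 2 k \<theta> Tstar_min (Tstar i))"
  let ?bound = "\<lambda>k. P_obj_scaled n K0 K H Tstar_min Tstar
      (joint_factor 2 k * mean_inverse_round_up_factor 2 k) (mean_inverse_round_up_factor 2 k)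
      (mean_round_up_factor 2 k)"
  have integrable: "set_integrable lborel {0..1::real} (?F k)"
    and expected: "(LINT \<theta>:{0..1::real}|lborel. ?F k \<theta>) \<le> ?bound k" if "k \<ge> 1" for k
    using expected_Fcost_round_up_le[OF _ that assms(8) _ Tstar_ge] assms(3-5) by (auto simp: less_imp_le)
  \<comment> \<open>The weight 0.2555 balances the two binding coefficients, those of H i * Tstar i and
      of K0 / Tstar_min.\<close>
  have "(LINT \<theta>:{0..1::real}|lborel. min (?F 1 \<theta>) (?F 2 \<theta>))
      \<le> (LINT \<theta>:{0..1::real}|lborel. 0.2555 * ?F 1 \<theta> + 0.7445 * ?F 2 \<theta>)"
    using integrable by (intro set_integral_mono set_integrable_min) (auto simp: min_def)
  also have "\<dots> = 0.2555 * (LINT \<theta>:{0..1::real}|lborel. ?F 1 \<theta>)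
      + 0.7445 * (LINT \<theta>:{0..1::real}|lborel. ?F 2 \<theta>)"
    using integrable by (simp add: set_integral_add set_integrable_mult_right)
  also have "\<dots> \<le> 0.2555 * ?bound 1 + 0.7445 * ?bound 2"
    using expected by (intro add_mono mult_left_mono) auto
  also have "\<dots> \<le> P_obj_scaled n K0 K H Tstar_min Tstar 1.2585 1.2585 1.2585"
    unfolding P_obj_scaled_convex_combination using assms(3-5,8) Tstar_ge
    by (intro P_obj_scaled_mono mixed_joint_inverse_factor_le mixed_inverse_factor_le
        mixed_mean_round_up_factor_le) (auto intro: less_imp_le less_le_trans)
  also have "\<dots> = 1.2585 * OPT_P n D K0 K H \<alpha>"
    unfolding P_obj_scaled_const OPT_P_eq_P_obj[OF assms(7)] ..
  finally show ?thesis
    using integrable by (simp add: set_integrable_min)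
qed

end
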